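(* Let $K$ be a real quadratic field, $\mathcal{O}_K^+$ the set of totally positive algebraic integers of $K$, $U^+$ the group of totally positive units, $\epsilon$ a generator of $U^+$, and $C$ a set of representatives of $\mathcal{O}_K^+/U^+$. For integers $m,n$ set \[\zeta_{K;C,\epsilon^kC}(m,n)=\sum_{\alpha\in C}\sum_{\beta\in\epsilon^kC}\frac{1}{N(\alpha)^mN(\alpha+\beta)^n},\qquad Z(m,n)=\sum_{k\in\mathbb{Z}}\zeta_{K;C,\epsilon^kC}(m,n),\] where $N$ is the norm from $K$ to $\mathbb{Q}$ and $\epsilon^kC=\{\epsilon^k\alpha:\alpha\in C\}$. Then $Z(m,n)$ is finite for $m>n>1$. *)

theory Defs
  imports "HOL-Analysis.Analysis" "HOL-Computational_Algebra.Computational_Algebra"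
begin

definition quad_field :: "int \<Rightarrow> real set" where
  "quad_field d = {of_rat a + of_rat b * sqrt (of_int d) | a b. True}"

text \<open>The nontrivial Galois conjugate a + b sqrt d \<mapsto> a - b sqrt d (well defined since sqrt d is irrational).\<close>
definition qconj :: "int \<Rightarrow> real \<Rightarrow> real" where
  "qconj d x = (THE y. \<exists>a b. x = of_rat a + of_rat b * sqrt (of_int d) \<and>
                             y = of_rat a - of_rat b * sqrt (of_int d))"

definition qnorm :: "int \<Rightarrow> real \<Rightarrow> real" where
  "qnorm d x = x * qconj d x"

definition qints :: "int \<Rightarrow> real set" where
  "qints d = {x \<in> quad_field d. algebraic_int x}"

definition qints_pos :: "int \<Rightarrow> real set" where
  "qints_pos d = {x \<in> qints d. x > 0 \<and> qconj d x > 0}"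

definition qunits_pos :: "int \<Rightarrow> real set" where
  "qunits_pos d = {u \<in> qints_pos d. inverse u \<in> qints d}"

end

theory Submission
  imports Defs
begin

text \<open>
  Rescaling each \<alpha> \<in> C by a suitable unit W \<alpha> makes both embeddings of W \<alpha> \<alpha> at least a
  fixed constant c > 0. The map (k, \<alpha>, \<beta>) \<mapsto> (W \<alpha> \<alpha>, W \<alpha> \<beta>) is injective, because C meets every
  unit orbit once and k \<mapsto> \<epsilon>^k is injective (Pell's equation provides a unit \<epsilon> \<noteq> 1), and it
  leaves N(\<alpha>) and N(\<alpha> + \<beta>) unchanged. So the sum is dominated by the sum of
  1 / (N(u)^m N(u + v)^n) over totally positive integers u, v with u, u' \<ge> c. Grouping u, u', v, v'
  by their integer parts, each group holds boundedly many pairs, since an integer x of K is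
  determined by the rational integers x + x' and (x - x') \<surd>d; and on a group with integer parts
  i, j, k, l the term is at most a constant times ((1 + i)(1 + j))^-m ((1 + k)(1 + l))^-n, which is
  summable as m, n \<ge> 2.
\<close>

section \<open>Summation and counting\<close>

lemma nonneg_summable_on_bounded_fibres:
  fixes f :: "'a \<Rightarrow> real" and g :: "'b \<Rightarrow> real" and \<pi> :: "'a \<Rightarrow> 'b"
  assumes g: "g summable_on UNIV" "\<And>y. g y \<ge> 0"
    and fg: "\<And>x. x \<in> A \<Longrightarrow> 0 \<le> f x \<and> f x \<le> g (\<pi> x)"
    and fibres: "\<And>y. finite {x\<in>A. \<pi> x = y} \<and> card {x\<in>A. \<pi> x = y} \<le> M"
  shows "f summable_on A"
proof (rule nonneg_bdd_above_summable_on)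
  show "0 \<le> f x" if "x \<in> A" for x using fg that by blast
  show "bdd_above (sum f ` {F. F \<subseteq> A \<and> finite F})"
  proof (rule bdd_aboveI2)
    fix F assume "F \<in> {F. F \<subseteq> A \<and> finite F}"
    hence FA: "F \<subseteq> A" and fin: "finite F" by auto
    have "sum f F \<le> (\<Sum>x\<in>F. g (\<pi> x))" using fg FA by (intro sum_mono) auto
    also have "\<dots> = (\<Sum>y\<in>\<pi> ` F. \<Sum>x\<in>{x\<in>F. \<pi> x = y}. g (\<pi> x))"
      using fin by (rule sum.image_gen)
    also have "\<dots> \<le> (\<Sum>y\<in>\<pi> ` F. of_nat M * g y)"
    proof (rule sum_mono)
      fix y
      have "card {x\<in>F. \<pi> x = y} \<le> card {x\<in>A. \<pi> x = y}"
        using fibres[of y] FA by (intro card_mono) auto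
      also have "\<dots> \<le> M" using fibres[of y] by blast
      finally have "of_nat (card {x\<in>F. \<pi> x = y}) * g y \<le> of_nat M * g y"
        using g(2) by (intro mult_right_mono) auto
      thus "(\<Sum>x\<in>{x\<in>F. \<pi> x = y}. g (\<pi> x)) \<le> of_nat M * g y" by simp
    qed
    also have "\<dots> \<le> of_nat M * infsum g UNIV"
      using fin g by (simp add: sum_distrib_left[symmetric] mult_left_mono finite_sum_le_infsum)
    finally show "sum f F \<le> of_nat M * infsum g UNIV" .
  qed
qed

lemma nonneg_summable_on_product:
  fixes a :: "'a \<Rightarrow> real" and b :: "'b \<Rightarrow> real"
  assumes "a summable_on UNIV" "b summable_on UNIV" "\<And>x. a x \<ge> 0" "\<And>y. b y \<ge> 0"
  shows "(\<lambda>(x, y). a x * b y) summable_on UNIV"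
proof (rule nonneg_bdd_above_summable_on)
  show "0 \<le> (\<lambda>(x, y). a x * b y) z" for z using assms by (auto split: prod.split)
  show "bdd_above (sum (\<lambda>(x, y). a x * b y) ` {F. F \<subseteq> UNIV \<and> finite F})"
  proof (rule bdd_aboveI2)
    fix F :: "('a \<times> 'b) set" assume "F \<in> {F. F \<subseteq> UNIV \<and> finite F}"
    hence fin: "finite F" by auto
    have "F \<subseteq> fst ` F \<times> snd ` F" by force
    hence "sum (\<lambda>(x, y). a x * b y) F \<le> sum (\<lambda>(x, y). a x * b y) (fst ` F \<times> snd ` F)"
      using fin assms by (intro sum_mono2) auto
    also have "\<dots> = sum a (fst ` F) * sum b (snd ` F)"
      by (simp add: sum_product sum.cartesian_product)
    also have "\<dots> \<le> infsum a UNIV * infsum b UNIV"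
      using fin assms by (intro mult_mono finite_sum_le_infsum sum_nonneg infsum_nonneg) auto
    finally show "sum (\<lambda>(x, y). a x * b y) F \<le> infsum a UNIV * infsum b UNIV" .
  qed
qed

lemma inverse_power_pairs_summable_on:
  assumes "p \<ge> 2"
  shows "(\<lambda>(i, j). 1 / ((1 + real i) * (1 + real j)) ^ p) summable_on (UNIV :: (nat \<times> nat) set)"
proof -
  have "summable (\<lambda>i. inverse (real (Suc i) ^ p))"
    using inverse_power_summable[OF assms] by (subst summable_Suc_iff) simp
  hence "(\<lambda>i::nat. 1 / (1 + real i) ^ p) summable_on UNIV"
    by (intro summable_nonneg_imp_summable_on) (simp_all add: inverse_eq_divide add.commute)
  from nonneg_summable_on_product[OF this this] show ?thesis
    by (simp add: power_mult_distrib)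
qed

lemma card_Ints_interval_le:
  assumes "L \<ge> 0"
  shows "finite {z::real. z \<in> \<int> \<and> a \<le> z \<and> z \<le> a + L}"
    and "card {z::real. z \<in> \<int> \<and> a \<le> z \<and> z \<le> a + L} \<le> nat \<lfloor>L\<rfloor> + 1"
proof -
  have sub: "{z::real. z \<in> \<int> \<and> a \<le> z \<and> z \<le> a + L} \<subseteq> of_int ` {\<lceil>a\<rceil> .. \<lceil>a\<rceil> + \<lfloor>L\<rfloor>}"
  proof
    fix z assume "z \<in> {z::real. z \<in> \<int> \<and> a \<le> z \<and> z \<le> a + L}"
    then obtain k where "z = of_int k" "a \<le> of_int k" "of_int k \<le> a + L"
      by (auto elim!: Ints_cases)
    moreover from this have "real_of_int k - real_of_int \<lceil>a\<rceil> \<le> L"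
      using le_of_int_ceiling[of a] by linarith
    hence "k - \<lceil>a\<rceil> \<le> \<lfloor>L\<rfloor>" by (simp add: le_floor_iff)
    ultimately show "z \<in> of_int ` {\<lceil>a\<rceil> .. \<lceil>a\<rceil> + \<lfloor>L\<rfloor>}" by (auto simp: ceiling_le_iff)
  qed
  show "finite {z::real. z \<in> \<int> \<and> a \<le> z \<and> z \<le> a + L}"
    by (rule finite_subset[OF sub]) simp
  have "card (of_int ` {\<lceil>a\<rceil> .. \<lceil>a\<rceil> + \<lfloor>L\<rfloor>} :: real set) \<le> nat \<lfloor>L\<rfloor> + 1"
    using card_image_le[of "{\<lceil>a\<rceil> .. \<lceil>a\<rceil> + \<lfloor>L\<rfloor>}" "of_int :: int \<Rightarrow> real"] assms by simp
  thus "card {z::real. z \<in> \<int> \<and> a \<le> z \<and> z \<le> a + L} \<le> nat \<lfloor>L\<rfloor> + 1"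
    using card_mono[OF _ sub] by (meson finite_imageI finite_atLeastAtMost_int order_trans)
qed

lemma exists_power_int_between:
  fixes \<eta> r :: real
  assumes "\<eta> > 1" "r > 0"
  shows "\<exists>j::int. 1 \<le> \<eta> powi j * r \<and> \<eta> powi j * r < \<eta>"
proof -
  define y where "y = log \<eta> r"
  have "0 \<le> y - of_int \<lfloor>y\<rfloor>" "y - of_int \<lfloor>y\<rfloor> < 1" using floor_correct[of y] by linarith+
  have "\<eta> powi (- \<lfloor>y\<rfloor>) = \<eta> powr (- of_int \<lfloor>y\<rfloor>)"
    using powr_real_of_int'[of \<eta> "- \<lfloor>y\<rfloor>"] assms(1) by simp
  moreover have "r = \<eta> powr y" using assms by (simp add: y_def)
  ultimately have "\<eta> powi (- \<lfloor>y\<rfloor>) * r = \<eta> powr (y - of_int \<lfloor>y\<rfloor>)" by (simp add: powr_add[symmetric])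
  moreover have "\<eta> powr 0 \<le> \<eta> powr (y - of_int \<lfloor>y\<rfloor>)"
    using assms(1) \<open>0 \<le> y - of_int \<lfloor>y\<rfloor>\<close> by (intro powr_mono) simp_all
  moreover have "\<eta> powr (y - of_int \<lfloor>y\<rfloor>) < \<eta> powr 1"
    using assms(1) \<open>y - of_int \<lfloor>y\<rfloor> < 1\<close> by (intro powr_less_mono) simp_all
  ultimately show ?thesis using assms(1) by (intro exI[of _ "- \<lfloor>y\<rfloor>"]) simp
qed

lemma exists_power_int_balance:
  fixes \<eta> a b :: real
  assumes "\<eta> > 1" "a > 0" "b > 0" "a * b \<ge> 1"
  shows "\<exists>j::int. inverse \<eta> \<le> \<eta> powi j * a \<and> inverse \<eta> \<le> b / \<eta> powi j"
proof -
  have "\<eta>\<^sup>2 > 1" using assms(1) by (simp add: one_less_power)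
  then obtain j where j: "1 \<le> (\<eta>\<^sup>2) powi j * (a / b)" "(\<eta>\<^sup>2) powi j * (a / b) < \<eta>\<^sup>2"
    using exists_power_int_between[of "\<eta>\<^sup>2" "a / b"] assms(2,3) by auto
  define u v where "u = \<eta> powi j * a" and "v = b / \<eta> powi j"
  have pos: "u > 0" "v > 0" using assms by (simp_all add: u_def v_def)
  have ratio: "u / v = (\<eta>\<^sup>2) powi j * (a / b)" and uv: "u * v = a * b"
    using assms by (simp_all add: u_def v_def power_int_mult_distrib power2_eq_square field_simps)
  have "1 \<le> u / v" "u / v < \<eta>\<^sup>2" using j ratio by simp_all
  moreover have "1 \<le> u * v" using uv assms(4) by simp
  ultimately have "1 * 1 \<le> (u / v) * (u * v)" by (intro mult_mono) simp_all
  also have "\<dots> = u\<^sup>2" using pos by (simp add: power2_eq_square)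
  finally have "1\<^sup>2 \<le> u\<^sup>2" by simp
  from power2_le_imp_le[OF this] pos have "1 \<le> u" by simp
  moreover have "inverse \<eta> \<le> 1" using assms(1) by (simp add: inverse_le_1_iff)
  ultimately have u_ge: "inverse \<eta> \<le> u" by linarith
  have "1 \<le> (u / v) * v\<^sup>2" using uv assms(4) pos by (simp add: power2_eq_square)
  also have "\<dots> < \<eta>\<^sup>2 * v\<^sup>2" using mult_strict_right_mono[OF \<open>u / v < \<eta>\<^sup>2\<close>, of "v\<^sup>2"] pos by simp
  finally have "(inverse \<eta>)\<^sup>2 < v\<^sup>2" using assms(1) by (simp add: power_inverse field_simps)
  from power2_less_imp_less[OF this] pos have "inverse \<eta> < v" by simp
  with u_ge show ?thesis unfolding u_def v_def by (intro exI[of _ j]) auto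
qed

lemma scaled_floor_le:
  fixes c a t :: real
  assumes "0 < c" "c \<le> 1" "c \<le> a" "0 \<le> t" "t \<le> a"
  shows "c / 2 * (1 + real (nat \<lfloor>t\<rfloor>)) \<le> a"
proof -
  have "c / 2 * (1 + real (nat \<lfloor>t\<rfloor>)) \<le> c / 2 * (1 + a)"
    using assms by (intro mult_left_mono) linarith+
  also have "\<dots> = c / 2 + c * a / 2" by (simp add: field_simps)
  also have "c * a \<le> a" using assms by (intro mult_left_le_one_le) auto
  finally show ?thesis using assms(3) by linarith
qed

lemma inverse_power_prod_le_floors:
  fixes c a a' t t' :: real
  assumes "0 < c" "c \<le> 1" "c \<le> a" "c \<le> a'" "0 \<le> t" "t \<le> a" "0 \<le> t'" "t' \<le> a'"
  shows "1 / (a * a') ^ p \<le> (2 / c) ^ (2 * p) / ((1 + real (nat \<lfloor>t\<rfloor>)) * (1 + real (nat \<lfloor>t'\<rfloor>))) ^ p"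
proof -
  define q where "q = (1 + real (nat \<lfloor>t\<rfloor>)) * (1 + real (nat \<lfloor>t'\<rfloor>))"
  have "0 < c / 2 * (1 + real (nat \<lfloor>t\<rfloor>)) * (c / 2 * (1 + real (nat \<lfloor>t'\<rfloor>)))"
    using assms by (simp add: add_pos_nonneg)
  moreover have "c / 2 * (1 + real (nat \<lfloor>t\<rfloor>)) * (c / 2 * (1 + real (nat \<lfloor>t'\<rfloor>))) \<le> a * a'"
    using assms by (intro mult_mono scaled_floor_le) auto
  ultimately have "1 / (a * a') ^ p \<le> 1 / ((c / 2) ^ 2 * q) ^ p"
    by (intro frac_le power_mono) (simp_all add: q_def power2_eq_square mult_ac)
  also have "\<dots> = (2 / c) ^ (2 * p) / q ^ p"
    by (simp add: power_mult_distrib power_mult power_divide)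
  finally show ?thesis by (simp add: q_def)
qed

lemma max_inverse_gt_1:
  fixes e :: real
  assumes "e > 0" "e \<noteq> 1"
  shows "max e (inverse e) > 1"
proof (cases "e < 1")
  case True
  thus ?thesis using assms one_less_inverse[of e] by (simp add: less_max_iff_disj)
next
  case False
  thus ?thesis using assms by (simp add: less_max_iff_disj)
qed

section \<open>Algebraic integers satisfying rational quadratics\<close>

lemma algebraic_int_if_sum_prod_Ints:
  fixes x y :: "'a :: field_char_0"
  assumes "x + y \<in> \<int>" "x * y \<in> \<int>"
  shows "algebraic_int x"
proof -
  obtain t n where t: "x + y = of_int t" and n: "x * y = of_int n"
    using assms by (auto elim!: Ints_cases)
  have "poly [:of_int n, - of_int t, 1:] x = 0"
    by (simp add: algebra_simps flip: t n)
  thus ?thesis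
    by (intro algebraic_int.intros[of "[:of_int n, - of_int t, 1:]"])
       (auto simp: coeff_pCons split: nat.splits)
qed

lemma Ints_if_Rats_sum_prod_Ints:
  fixes x y :: "'a :: field_char_0"
  assumes "x \<in> \<rat>" "x + y \<in> \<int>" "x * y \<in> \<int>"
  shows "x \<in> \<int>"
  using rational_algebraic_int_is_int[OF algebraic_int_if_sum_prod_Ints[OF assms(2,3)] assms(1)] .

lemma Rats_linear_eq_0:
  fixes a b x :: "'a :: field_char_0"
  assumes "a \<in> \<rat>" "b \<in> \<rat>" "x \<notin> \<rat>" "a + b * x = 0"
  shows "a = 0" "b = 0"
proof -
  show "b = 0"
  proof (rule ccontr)
    assume "b \<noteq> 0"
    hence "x = - a / b" using assms(4) by (simp add: field_simps add_eq_0_iff)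
    with assms(1-3) show False by simp
  qed
  thus "a = 0" using assms(4) by simp
qed

lemma map_poly_of_int_add [simp]:
  "map_poly (of_int :: int \<Rightarrow> 'a :: comm_ring_1) (p + q) = map_poly of_int p + map_poly of_int q"
  by (rule poly_eqI) (simp add: coeff_map_poly)

lemma map_poly_of_int_mult [simp]:
  "map_poly (of_int :: int \<Rightarrow> 'a :: comm_ring_1) (p * q) = map_poly of_int p * map_poly of_int q"
  by (rule poly_eqI) (simp add: coeff_map_poly coeff_mult)

lemma map_poly_of_int_smult [simp]:
  "map_poly (of_int :: int \<Rightarrow> 'a :: comm_ring_1) (smult c p) = smult (of_int c) (map_poly of_int p)"
  by (rule poly_eqI) (simp add: coeff_map_poly)

lemma poly_degree_le_2_eq:
  assumes "degree p \<le> 2"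
  shows "p = [:coeff p 0, coeff p 1, coeff p 2:]"
proof (rule poly_eqI)
  fix i
  consider "i = 0" | "i = 1" | "i = 2" | j where "i = Suc (Suc (Suc j))"
    by (metis One_nat_def Suc_1 not0_implies_Suc)
  thus "coeff p i = coeff [:coeff p 0, coeff p 1, coeff p 2:] i"
    using assms coeff_eq_0[of p i] by cases (simp_all add: numeral_2_eq_2)
qed

lemma lead_coeff_eq_1_if_primitive_dvd_monic:
  fixes M Q p :: "int poly"
  assumes eq: "smult (lead_coeff M ^ k) p = M * Q" and "content M = 1"
    and "lead_coeff p = 1" and "lead_coeff M > 0"
  shows "lead_coeff M = 1"
proof -
  define D where "D = lead_coeff M"
  have "content p dvd 1" using content_dvd_coeff[of p "degree p"] assms(3) by simp
  hence "content p = 1" using is_unit_content_iff by blast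
  hence "content Q = D ^ k"
    using arg_cong[OF eq, of content] assms(2,4) by (simp add: content_mult D_def)
  hence "D ^ k dvd lead_coeff Q" by (metis content_dvd_coeff)
  then obtain e where e: "lead_coeff Q = D ^ k * e" by (elim dvdE)
  have "M \<noteq> 0" using assms(4) by auto
  hence "D * lead_coeff Q = D ^ k"
    using arg_cong[OF eq, of lead_coeff] assms(3) by (simp add: lead_coeff_mult D_def)
  hence "D ^ k * (D * e) = D ^ k * 1" by (simp add: e algebra_simps)
  hence "D * e = 1" using assms(4) \<open>M \<noteq> 0\<close> by (simp add: D_def)
  thus ?thesis using assms(4) by (simp add: D_def zmult_eq_1_iff)
qed

lemma primitive_int_quadratic_root:
  fixes x t n :: real
  assumes "t \<in> \<rat>" "n \<in> \<rat>" "x * x - t * x + n = 0"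
  obtains M :: "int poly"
  where "poly (map_poly of_int M) x = 0" "content M = 1" "degree M = 2" "lead_coeff M > 0"
proof -
  obtain a b a' b' :: int where "b > 0" "t = of_int a / of_int b" "b' > 0" "n = of_int a' / of_int b'"
    using assms(1,2) by (metis Rats_cases')
  then obtain c0 c1 c2 :: int
    where c2: "c2 > 0" and t: "t = - of_int c1 / of_int c2" and n: "n = of_int c0 / of_int c2"
    by (intro that[of "b * b'" "- a * b'" "a' * b"]) (auto simp: field_simps)
  define M0 where "M0 = [:c0, c1, c2:]"
  define M where "M = primitive_part M0"
  have M0: "M0 \<noteq> 0" "degree M0 = 2" "lead_coeff M0 = c2" using c2 by (auto simp: M0_def)
  have "poly (map_poly of_int M0) x = of_int c2 * (x * x - t * x + n)"
    using c2 by (simp add: M0_def t n map_poly_pCons field_simps)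
  moreover have "map_poly of_int M0 = smult (of_int (content M0)) (map_poly (of_int :: int \<Rightarrow> real) M)"
    by (metis M_def content_times_primitive_part map_poly_of_int_smult)
  ultimately have "of_int (content M0) * poly (map_poly of_int M) x = 0"
    using assms(3) by simp
  hence "poly (map_poly of_int M) x = 0" using M0 by simp
  moreover have "content M = 1" "degree M = 2" using M0 by (auto simp: M_def)
  moreover have "content M0 * lead_coeff M = c2"
    using M0 by (metis M_def content_times_primitive_part lead_coeff_smult)
  with c2 have "lead_coeff M > 0"
    using normalize_content[of M0] zero_less_mult_iff[of "content M0" "lead_coeff M"]
    by (auto simp: normalize_int_def)
  ultimately show thesis by (rule that)
qed

text \<open>Pseudo-division by M leaves a remainder of degree at most 1 vanishing at the irrational x, so M
  divides a multiple of the monic minimal polynomial of x, and Gauss's lemma forces M to be monic.\<close>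
lemma lead_coeff_eq_1_if_algebraic_int_root:
  fixes x :: real and M :: "int poly"
  assumes "algebraic_int x" "x \<notin> \<rat>" and M: "poly (map_poly of_int M) x = 0"
    "content M = 1" "degree M = 2" "lead_coeff M > 0"
  shows "lead_coeff M = 1"
proof -
  obtain p where p: "poly (map_poly of_int p) x = 0" "lead_coeff p = 1"
    using assms(1) algebraic_int_altdef_ipoly by blast
  have "M \<noteq> 0" using M(3) by auto
  obtain q r where qr: "pseudo_divmod p M = (q, r)" by fastforce
  have "degree r \<le> 1" using pseudo_divmod(2)[OF \<open>M \<noteq> 0\<close> qr] M(3) by auto
  hence r: "r = [:coeff r 0, coeff r 1:]" using poly_degree_le_2_eq[of r] coeff_eq_0[of r 2] by simp
  have eq: "smult (lead_coeff M ^ (Suc (degree p) - degree M)) p = M * q + r"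
    using pseudo_divmod(1)[OF \<open>M \<noteq> 0\<close> qr] .
  have "poly (map_poly of_int (smult (lead_coeff M ^ (Suc (degree p) - degree M)) p)) x =
        poly (map_poly of_int (M * q + r)) x"
    by (simp only: eq)
  hence "of_int (coeff r 0) + of_int (coeff r 1) * x = 0"
    using p M(1) by (subst (asm) r) (simp add: map_poly_pCons mult.commute)
  from Rats_linear_eq_0[OF Rats_of_int Rats_of_int assms(2) this]
  have "r = 0" by (subst r) simp
  with eq have "smult (lead_coeff M ^ (Suc (degree p) - degree M)) p = M * q" by simp
  thus ?thesis using M(2) p(2) M(4) by (rule lead_coeff_eq_1_if_primitive_dvd_monic)
qed

lemma algebraic_int_quadratic_Ints:
  fixes x t n :: real
  assumes "algebraic_int x" "x \<notin> \<rat>" "t \<in> \<rat>" "n \<in> \<rat>" and quad: "x * x - t * x + n = 0"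
  shows "t \<in> \<int>" "n \<in> \<int>"
proof -
  obtain M :: "int poly" where M: "poly (map_poly of_int M) x = 0" "content M = 1" "degree M = 2"
    "lead_coeff M > 0"
    using primitive_int_quadratic_root[OF assms(3,4) quad] by blast
  have "lead_coeff M = 1" using lead_coeff_eq_1_if_algebraic_int_root[OF assms(1,2) M] .
  hence M_eq: "M = [:coeff M 0, coeff M 1, 1:]" using poly_degree_le_2_eq[of M] M(3) by simp
  have "of_int (coeff M 0) + of_int (coeff M 1) * x + x * x = 0"
    using M(1) by (subst (asm) M_eq) (simp add: map_poly_pCons algebra_simps)
  hence "(of_int (coeff M 0) - n) + (of_int (coeff M 1) + t) * x = 0"
    using quad by (simp add: algebra_simps)
  from Rats_linear_eq_0[OF Rats_diff[OF Rats_of_int assms(4)] Rats_add[OF Rats_of_int assms(3)] assms(2) this]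
  have "n = of_int (coeff M 0)" "t = - of_int (coeff M 1)" by (simp_all add: eq_neg_iff_add_eq_0)
  thus "t \<in> \<int>" "n \<in> \<int>" by simp_all
qed

section \<open>Pell's equation\<close>

lemma pell_norm_nonzero:
  fixes d h k :: int
  assumes "sqrt (of_int d) \<notin> \<rat>" "k \<noteq> 0"
  shows "h * h - d * k * k \<noteq> 0"
proof
  assume "h * h - d * k * k = 0"
  hence "(of_int h / of_int k) ^ 2 = (of_int d :: real)"
    using assms(2) by (simp add: field_simps power2_eq_square flip: of_int_mult)
  hence "sqrt (of_int d) = \<bar>of_int h / of_int k\<bar>" by (metis real_sqrt_abs)
  with assms(1) show False by simp
qed

lemma approx_set_pell_norm_bound:
  fixes d h k :: int
  defines "r \<equiv> sqrt (of_int d)"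
  assumes "d > 0" "(h, k) \<in> approx_set r"
  shows "k > 0" "\<bar>h * h - d * k * k\<bar> \<le> \<lceil>2 * r + 1\<rceil>"
proof -
  from assms(3) have k: "k > 0" and approx: "\<bar>r - of_int h / of_int k\<bar> < 1 / (of_int k)\<^sup>2"
    by (auto simp: approx_set_def)
  show "k > 0" by fact
  have r0: "r \<ge> 0" using assms(2) by (simp add: r_def)
  have "\<bar>of_int h - of_int k * r\<bar> = of_int k * \<bar>r - of_int h / of_int k\<bar>"
    using k by (simp add: field_simps abs_mult[symmetric] abs_minus_commute)
  also have "\<dots> < of_int k * (1 / (of_int k)\<^sup>2)"
    using approx k by (intro mult_strict_left_mono) auto
  finally have close: "\<bar>of_int h - of_int k * r\<bar> < 1 / of_int k" using k by (simp add: power2_eq_square)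
  have "0 \<le> of_int k * r" "0 < 1 / real_of_int k" using k r0 by simp_all
  hence far: "\<bar>of_int h + of_int k * r\<bar> \<le> 1 / of_int k + 2 * of_int k * r"
    using close unfolding abs_le_iff abs_less_iff by (intro conjI; linarith)
  have "r * r = of_int d" using assms(2) by (simp add: r_def)
  hence "of_int (h * h - d * k * k) = (of_int h - of_int k * r) * (of_int h + of_int k * r)"
    by (simp add: algebra_simps)
  hence "\<bar>real_of_int (h * h - d * k * k)\<bar> = \<bar>of_int h - of_int k * r\<bar> * \<bar>of_int h + of_int k * r\<bar>"
    by (simp add: abs_mult)
  also have "\<dots> \<le> 1 / of_int k * (1 / of_int k + 2 * of_int k * r)"
    using close far k by (intro mult_mono) auto
  also have "\<dots> = 1 / (of_int k)\<^sup>2 + 2 * r" using k by (simp add: field_simps power2_eq_square)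
  also have "\<dots> \<le> 1 + 2 * r" using k by (simp add: power_le_one_iff)
  finally show "\<bar>h * h - d * k * k\<bar> \<le> \<lceil>2 * r + 1\<rceil>" by linarith
qed

lemma infinite_pairs_bounded_pell_norm:
  fixes d :: int
  assumes "d > 0" "sqrt (of_int d) \<notin> \<rat>"
  shows "infinite {(h, k). k > 0 \<and> \<bar>h * h - d * k * k\<bar> \<le> \<lceil>2 * sqrt (of_int d) + 1\<rceil>}"
proof -
  have "approx_set (sqrt (of_int d)) \<subseteq>
          {(h, k). k > 0 \<and> \<bar>h * h - d * k * k\<bar> \<le> \<lceil>2 * sqrt (of_int d) + 1\<rceil>}"
    using approx_set_pell_norm_bound[OF assms(1)] by blast
  moreover have "infinite (approx_set (sqrt (of_int d)))"
    using rational_iff_finite_approx_set assms(2) by blast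
  ultimately show ?thesis using finite_subset by blast
qed

text \<open>Up to the sign of y, x + y \<surd>d is (h1 + k1 \<surd>d)(h2 - k2 \<surd>d) / N, integral by the congruences
  and of norm 1 by Brahmagupta's identity.\<close>
lemma pell_solution_from_congruent_pairs:
  fixes d h1 k1 h2 k2 N :: int
  assumes N1: "h1 * h1 - d * k1 * k1 = N" and N2: "h2 * h2 - d * k2 * k2 = N" and "N \<noteq> 0"
    and "h2 mod N = h1 mod N" "k2 mod N = k1 mod N"
    and "k1 > 0" "k2 > 0" "(h1, k1) \<noteq> (h2, k2)"
  shows "\<exists>x y. x * x - d * y * y = 1 \<and> y \<noteq> 0"
proof -
  have "N dvd h2 - h1" "N dvd k2 - k1" using assms(4,5) by (simp_all add: mod_eq_dvd_iff)
  then obtain u v where "h2 - h1 = N * u" "k2 - k1 = N * v" by (elim dvdE)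
  hence h2: "h2 = h1 + N * u" and k2: "k2 = k1 + N * v" by simp_all
  define x where "x = 1 + h1 * u - d * k1 * v"
  define y where "y = h1 * v - u * k1"
  have Nx: "N * x = h1 * h2 - d * k1 * k2"
    unfolding x_def h2 k2 by (simp add: algebra_simps flip: N1)
  have Ny: "N * y = h1 * k2 - h2 * k1"
    unfolding y_def h2 k2 by (simp add: algebra_simps)
  have "N * N * (x * x - d * y * y) = (N * x) * (N * x) - d * (N * y) * (N * y)"
    by (simp add: algebra_simps)
  also have "\<dots> = (h1 * h1 - d * k1 * k1) * (h2 * h2 - d * k2 * k2)"
    unfolding Nx Ny by (simp add: algebra_simps)
  finally have pell: "x * x - d * y * y = 1" using \<open>N \<noteq> 0\<close> by (simp add: N1 N2)
  have "y \<noteq> 0"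
  proof
    assume "y = 0"
    hence hk: "h1 * k2 = h2 * k1" using Ny by simp
    have "N * (k2 * k2) = (h1 * k2) * (h1 * k2) - d * k1 * k1 * k2 * k2"
      by (simp add: algebra_simps flip: N1)
    also have "\<dots> = (k1 * k1) * N" unfolding hk by (simp add: algebra_simps flip: N2)
    finally have "k2 * k2 = k1 * k1" using \<open>N \<noteq> 0\<close> by (simp add: mult.commute)
    hence "(k2 - k1) * (k2 + k1) = 0" by (simp add: algebra_simps)
    hence "k2 = k1" using \<open>k1 > 0\<close> \<open>k2 > 0\<close> by simp
    with hk \<open>k1 > 0\<close> assms(8) show False by simp
  qed
  with pell show ?thesis by blast
qed

lemma pell_nontrivial_solution:
  fixes d :: int
  assumes "d > 0" "sqrt (of_int d) \<notin> \<rat>"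
  shows "\<exists>x y. x * x - d * y * y = 1 \<and> y \<noteq> 0"
proof -
  define B where "B = \<lceil>2 * sqrt (of_int d) + 1\<rceil>"
  define P where "P = {(h, k). k > 0 \<and> \<bar>h * h - d * k * k\<bar> \<le> B}"
  define \<nu> where "\<nu> = (\<lambda>(h, k). h * h - d * k * k)"
  define \<phi> where "\<phi> = (\<lambda>(h, k). (\<nu> (h, k), h mod \<nu> (h, k), k mod \<nu> (h, k)))"
  have infP: "infinite P"
    using infinite_pairs_bounded_pell_norm[OF assms] by (simp add: P_def B_def)
  have \<nu>0: "\<nu> a \<noteq> 0" if "a \<in> P" for a
    using that pell_norm_nonzero[OF assms(2)] by (auto simp: P_def \<nu>_def)
  have "\<phi> z \<in> {-B..B} \<times> {-B..B} \<times> {-B..B}" if "z \<in> P" for z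
  proof -
    obtain h k where z: "z = (h, k)" by fastforce
    have "\<bar>h mod \<nu> z\<bar> < \<bar>\<nu> z\<bar>" "\<bar>k mod \<nu> z\<bar> < \<bar>\<nu> z\<bar>" "\<bar>\<nu> z\<bar> \<le> B"
      using \<nu>0[OF that] that by (simp_all add: abs_mod_less z P_def \<nu>_def)
    thus ?thesis by (auto simp: \<phi>_def z)
  qed
  hence "\<phi> ` P \<subseteq> {-B..B} \<times> {-B..B} \<times> {-B..B}" by blast
  hence "finite (\<phi> ` P)" by (rule finite_subset) simp
  from pigeonhole_infinite[OF infP this] obtain a where a: "a \<in> P"
    and "infinite {b \<in> P. \<phi> b = \<phi> a}" by blast
  hence "{b \<in> P. \<phi> b = \<phi> a} \<noteq> {a}" by auto
  then obtain b where b: "b \<in> P" "\<phi> b = \<phi> a" "b \<noteq> a" using a by blast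
  obtain h1 k1 h2 k2 where "a = (h1, k1)" "b = (h2, k2)" by fastforce
  with a b \<nu>0[OF a] show ?thesis
    by (intro pell_solution_from_congruent_pairs[of h1 d k1 "\<nu> a" h2 k2])
       (auto simp: P_def \<nu>_def \<phi>_def)
qed

section \<open>Real quadratic fields\<close>

locale real_quadratic_field =
  fixes d :: int
  assumes d_gt_1: "d > 1" and squarefree: "squarefree d"
begin

abbreviation sqrtd :: real where "sqrtd \<equiv> sqrt (of_int d)"

lemma sqrtd_pos: "sqrtd > 0"
  using d_gt_1 by simp

lemma sqrtd_square: "sqrtd * sqrtd = of_int d"
  using d_gt_1 by simp

lemma sqrtd_irrational: "sqrtd \<notin> \<rat>"
proof
  assume "sqrtd \<in> \<rat>"
  moreover have "algebraic_int sqrtd" by (intro algebraic_int_sqrt int_imp_algebraic_int) simp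
  ultimately have "sqrtd \<in> \<int>" by (intro rational_algebraic_int_is_int)
  then obtain k where "sqrtd = of_int k" by (elim Ints_cases)
  hence "of_int (k * k) = (of_int d :: real)" using sqrtd_square by simp
  hence "k * k = d" by (simp only: of_int_eq_iff)
  hence "k ^ 2 dvd d" by (simp add: power2_eq_square)
  hence "k dvd 1" using squarefree by (simp add: squarefree_def)
  hence "\<bar>k\<bar> = 1" by simp
  hence "k * k = 1" by (metis abs_mult_self_eq mult.right_neutral)
  with \<open>k * k = d\<close> d_gt_1 show False by simp
qed

lemma quad_field_rep_eq_iff:
  "of_rat a + of_rat b * sqrtd = of_rat a' + of_rat b' * sqrtd \<longleftrightarrow> a = a' \<and> b = b'"
proof
  assume eq: "of_rat a + of_rat b * sqrtd = of_rat a' + of_rat b' * sqrtd"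
  have "of_rat (a - a') + of_rat (b - b') * sqrtd = 0"
    using eq by (simp add: of_rat_diff algebra_simps)
  from Rats_linear_eq_0[OF Rats_of_rat Rats_of_rat sqrtd_irrational this] show "a = a' \<and> b = b'"
    by simp
qed simp

lemma quad_field_rep [simp, intro]: "of_rat a + of_rat b * sqrtd \<in> quad_field d"
  by (auto simp: quad_field_def)

lemma quad_fieldE:
  assumes "x \<in> quad_field d"
  obtains a b where "x = of_rat a + of_rat b * sqrtd"
  using assms by (auto simp: quad_field_def)

lemma qconj_rep [simp]: "qconj d (of_rat a + of_rat b * sqrtd) = of_rat a - of_rat b * sqrtd"
  unfolding qconj_def by (rule the_equality) (auto simp: quad_field_rep_eq_iff)

lemma quad_field_of_int_rep [simp]: "of_int a + of_int b * sqrtd \<in> quad_field d"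
  using quad_field_rep[of "of_int a" "of_int b"] by simp

lemma qconj_of_int_rep [simp]: "qconj d (of_int a + of_int b * sqrtd) = of_int a - of_int b * sqrtd"
  using qconj_rep[of "of_int a" "of_int b"] by simp

lemma qconj_Rats: "x \<in> \<rat> \<Longrightarrow> qconj d x = x"
  using qconj_rep[of _ 0] by (auto elim!: Rats_cases)

lemma quad_field_add: "x \<in> quad_field d \<Longrightarrow> y \<in> quad_field d \<Longrightarrow> x + y \<in> quad_field d"
  and qconj_add: "x \<in> quad_field d \<Longrightarrow> y \<in> quad_field d \<Longrightarrow> qconj d (x + y) = qconj d x + qconj d y"
proof -
  assume "x \<in> quad_field d" "y \<in> quad_field d"
  then obtain a b a' b' where x: "x = of_rat a + of_rat b * sqrtd" and y: "y = of_rat a' + of_rat b' * sqrtd"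
    by (metis quad_fieldE)
  have xy: "x + y = of_rat (a + a') + of_rat (b + b') * sqrtd"
    by (simp add: x y of_rat_add algebra_simps)
  show "x + y \<in> quad_field d" by (simp only: xy quad_field_rep)
  have "qconj d x = of_rat a - of_rat b * sqrtd" "qconj d y = of_rat a' - of_rat b' * sqrtd"
    by (simp_all add: x y)
  moreover have "qconj d (x + y) = of_rat (a + a') - of_rat (b + b') * sqrtd" by (simp only: xy qconj_rep)
  ultimately show "qconj d (x + y) = qconj d x + qconj d y" by (simp add: of_rat_add algebra_simps)
qed

lemma quad_field_mult: "x \<in> quad_field d \<Longrightarrow> y \<in> quad_field d \<Longrightarrow> x * y \<in> quad_field d"
  and qconj_mult: "x \<in> quad_field d \<Longrightarrow> y \<in> quad_field d \<Longrightarrow> qconj d (x * y) = qconj d x * qconj d y"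
proof -
  assume "x \<in> quad_field d" "y \<in> quad_field d"
  then obtain a b a' b' where x: "x = of_rat a + of_rat b * sqrtd" and y: "y = of_rat a' + of_rat b' * sqrtd"
    by (metis quad_fieldE)
  have "x * y = of_rat a * of_rat a' + of_rat b * of_rat b' * (sqrtd * sqrtd)
                 + (of_rat a * of_rat b' + of_rat a' * of_rat b) * sqrtd"
    by (simp add: x y algebra_simps)
  hence xy: "x * y = of_rat (a * a' + of_int d * b * b') + of_rat (a * b' + a' * b) * sqrtd"
    by (simp only: sqrtd_square) (simp add: of_rat_add of_rat_mult)
  show "x * y \<in> quad_field d" by (simp only: xy quad_field_rep)
  have "qconj d x * qconj d y = of_rat a * of_rat a' + of_rat b * of_rat b' * (sqrtd * sqrtd)
                 - (of_rat a * of_rat b' + of_rat a' * of_rat b) * sqrtd"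
    by (simp add: x y algebra_simps)
  thus "qconj d (x * y) = qconj d x * qconj d y"
    by (simp only: xy qconj_rep sqrtd_square) (simp add: of_rat_add of_rat_mult)
qed

lemma quad_field_trace_Rats: "x \<in> quad_field d \<Longrightarrow> x + qconj d x \<in> \<rat>"
  and quad_field_norm_Rats: "x \<in> quad_field d \<Longrightarrow> x * qconj d x \<in> \<rat>"
  and quad_field_diff_conj_Rats: "x \<in> quad_field d \<Longrightarrow> (x - qconj d x) * sqrtd \<in> \<rat>"
proof -
  assume "x \<in> quad_field d"
  then obtain a b where x: "x = of_rat a + of_rat b * sqrtd" by (rule quad_fieldE)
  show "x + qconj d x \<in> \<rat>" by (simp add: x)
  have "x * qconj d x = of_rat a * of_rat a - of_rat b * of_rat b * (sqrtd * sqrtd)"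
    by (simp add: x algebra_simps)
  thus "x * qconj d x \<in> \<rat>" by simp
  have "(x - qconj d x) * sqrtd = 2 * of_rat b * (sqrtd * sqrtd)" by (simp add: x algebra_simps)
  thus "(x - qconj d x) * sqrtd \<in> \<rat>" by simp
qed

lemma qints_iff:
  "x \<in> qints d \<longleftrightarrow> x \<in> quad_field d \<and> x + qconj d x \<in> \<int> \<and> x * qconj d x \<in> \<int>"
proof
  assume "x \<in> qints d"
  hence K: "x \<in> quad_field d" and int: "algebraic_int x" by (auto simp: qints_def)
  have "x + qconj d x \<in> \<int> \<and> x * qconj d x \<in> \<int>"
  proof (cases "x \<in> \<rat>")
    case True
    hence "x \<in> \<int>" using int by (intro rational_algebraic_int_is_int)
    thus ?thesis using True by (simp add: qconj_Rats)
  next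
    case False
    have "x * x - (x + qconj d x) * x + x * qconj d x = 0" by (simp add: algebra_simps)
    from algebraic_int_quadratic_Ints[OF int False quad_field_trace_Rats[OF K] quad_field_norm_Rats[OF K] this]
    show ?thesis by simp
  qed
  with K show "x \<in> quad_field d \<and> x + qconj d x \<in> \<int> \<and> x * qconj d x \<in> \<int>" by simp
next
  assume "x \<in> quad_field d \<and> x + qconj d x \<in> \<int> \<and> x * qconj d x \<in> \<int>"
  thus "x \<in> qints d" using algebraic_int_if_sum_prod_Ints[of x "qconj d x"] by (simp add: qints_def)
qed

lemma qints_mult:
  assumes "x \<in> qints d" "y \<in> qints d"
  shows "x * y \<in> qints d"
proof -
  define x' y' where "x' = qconj d x" and "y' = qconj d y"
  have K: "x \<in> quad_field d" "y \<in> quad_field d"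
    and int: "x + x' \<in> \<int>" "x * x' \<in> \<int>" "y + y' \<in> \<int>" "y * y' \<in> \<int>"
    using assms by (auto simp: qints_iff x'_def y'_def)
  have conj: "qconj d (x * y) = x' * y'" by (simp add: qconj_mult[OF K] x'_def y'_def)
  text \<open>The trace x y + x' y' is rational and, together with x y' + x' y, has integral sum and product.\<close>
  have "x * y + x' * y' + (x * y' + x' * y) = (x + x') * (y + y')" by (simp add: algebra_simps)
  hence sum: "x * y + x' * y' + (x * y' + x' * y) \<in> \<int>" using int by simp
  have "(x * y + x' * y') * (x * y' + x' * y) =
      (y * y') * ((x + x') * (x + x') - 2 * (x * x')) + (x * x') * ((y + y') * (y + y') - 2 * (y * y'))"
    by (simp add: algebra_simps)
  hence prod: "(x * y + x' * y') * (x * y' + x' * y) \<in> \<int>" using int by simp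
  have "x * y + x' * y' \<in> \<rat>"
    using quad_field_trace_Rats[OF quad_field_mult[OF K]] by (simp only: conj)
  from Ints_if_Rats_sum_prod_Ints[OF this sum prod] have "x * y + x' * y' \<in> \<int>" .
  moreover have "x * y * (x' * y') = (x * x') * (y * y')" by (simp add: algebra_simps)
  hence "x * y * (x' * y') \<in> \<int>" using Ints_mult[OF int(2,4)] by (simp only:)
  ultimately show ?thesis by (simp add: qints_iff quad_field_mult[OF K] conj)
qed

lemma qints_diff_conj_sqrtd_Ints:
  assumes "x \<in> qints d"
  shows "(x - qconj d x) * sqrtd \<in> \<int>"
proof -
  have K: "x \<in> quad_field d" using assms by (simp add: qints_def)
  obtain t n where t: "x + qconj d x = of_int t" and n: "x * qconj d x = of_int n"
    using assms by (auto simp: qints_iff elim!: Ints_cases)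
  have "(x - qconj d x) * sqrtd * (- ((x - qconj d x) * sqrtd)) =
        - ((x - qconj d x) * (x - qconj d x)) * (sqrtd * sqrtd)"
    by (simp add: algebra_simps)
  also have "\<dots> = - of_int d * ((x + qconj d x) * (x + qconj d x) - 4 * (x * qconj d x))"
    unfolding sqrtd_square by (simp add: algebra_simps)
  also have "\<dots> = of_int (- d * (t * t - 4 * n))" by (simp add: t n)
  finally have "(x - qconj d x) * sqrtd * (- ((x - qconj d x) * sqrtd)) \<in> \<int>"
    by (metis Ints_of_int)
  moreover have "(x - qconj d x) * sqrtd + (- ((x - qconj d x) * sqrtd)) \<in> \<int>" by simp
  ultimately show ?thesis
    using Ints_if_Rats_sum_prod_Ints[OF quad_field_diff_conj_Rats[OF K]] by blast
qed

lemma qnorm_mult: "x \<in> quad_field d \<Longrightarrow> y \<in> quad_field d \<Longrightarrow> qnorm d (x * y) = qnorm d x * qnorm d y"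
  by (simp add: qnorm_def qconj_mult)

lemma qints_pos_mult:
  assumes "x \<in> qints_pos d" "y \<in> qints_pos d"
  shows "x * y \<in> qints_pos d"
  using assms qints_mult[of x y] qconj_mult[of x y] by (auto simp: qints_pos_def qints_def)

lemma qints_pos_qnorm_ge_1:
  assumes "x \<in> qints_pos d"
  shows "qnorm d x \<ge> 1"
proof -
  obtain k where k: "qnorm d x = of_int k"
    using assms by (auto simp: qints_pos_def qints_iff qnorm_def elim!: Ints_cases)
  moreover have "qnorm d x > 0" using assms by (simp add: qints_pos_def qnorm_def)
  ultimately show ?thesis by simp
qed

lemma qunits_pos_qconj:
  assumes "u \<in> qunits_pos d"
  shows "qconj d u = inverse u"
proof -
  have u: "u \<in> qints_pos d" and u_inv: "inverse u \<in> qints d" using assms by (auto simp: qunits_pos_def)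
  hence K: "u \<in> quad_field d" "inverse u \<in> quad_field d" and "u > 0"
    by (auto simp: qints_pos_def qints_def)
  have "qnorm d u * qnorm d (inverse u) = qnorm d 1"
    using qnorm_mult[OF K] \<open>u > 0\<close> by simp
  also have "\<dots> = 1" using qconj_Rats[of 1] by (simp add: qnorm_def)
  finally have "qnorm d u * qnorm d (inverse u) = 1" .
  moreover obtain p q where "qnorm d u = of_int p" "qnorm d (inverse u) = of_int q"
    using u u_inv by (auto simp: qints_pos_def qints_iff qnorm_def elim!: Ints_cases)
  moreover have "qnorm d u \<ge> 1" using qints_pos_qnorm_ge_1[OF u] .
  ultimately have "p * q = 1" "p > 0" by (simp_all flip: of_int_mult)
  hence "qnorm d u = 1" using \<open>qnorm d u = of_int p\<close> pos_zmult_eq_1_iff by auto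
  thus ?thesis using \<open>u > 0\<close> by (simp add: qnorm_def field_simps)
qed

lemma qunits_pos_mult:
  assumes "u \<in> qunits_pos d" "x \<in> qints_pos d"
  shows "u * x \<in> qints_pos d" "qconj d (u * x) = qconj d x / u"
proof -
  have K: "u \<in> quad_field d" "x \<in> quad_field d"
    using assms by (auto simp: qunits_pos_def qints_pos_def qints_def)
  show "u * x \<in> qints_pos d" using assms by (simp add: qunits_pos_def qints_pos_mult)
  show "qconj d (u * x) = qconj d x / u"
    using qconj_mult[OF K] qunits_pos_qconj[OF assms(1)] by (simp add: field_simps)
qed

lemma qnorm_qunits_pos_mult:
  assumes "u \<in> qunits_pos d" "x \<in> quad_field d"
  shows "qnorm d (u * x) = qnorm d x"
proof -
  have K: "u \<in> quad_field d" and "u > 0" using assms(1) by (auto simp: qunits_pos_def qints_pos_def qints_def)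
  hence "qnorm d u = 1" using qunits_pos_qconj[OF assms(1)] by (simp add: qnorm_def)
  thus ?thesis using qnorm_mult[OF K assms(2)] by simp
qed

lemma qunits_pos_nontrivial: "\<exists>u \<in> qunits_pos d. u \<noteq> 1"
proof -
  obtain x y where pell: "x * x - d * y * y = 1" and "y \<noteq> 0"
    using pell_nontrivial_solution[of d] d_gt_1 sqrtd_irrational by auto
  define X where "X = \<bar>x\<bar>"
  have "X * X = 1 + d * y * y" using pell by (simp add: X_def abs_mult_self_eq algebra_simps)
  moreover have "d * y * y \<ge> 0" using d_gt_1 by (simp add: mult.assoc)
  ultimately have "X \<noteq> 0" by auto
  hence "X \<ge> 1" by (simp add: X_def)
  define u where "u = of_int X + of_int y * sqrtd"
  define u' where "u' = qconj d u"
  have u': "u' = of_int X - of_int y * sqrtd" by (simp add: u'_def u_def)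
  have K: "u \<in> quad_field d" "u' \<in> quad_field d"
    using quad_field_of_int_rep[of X "- y"] by (simp_all add: u_def u')
  have conj: "qconj d u' = u" using qconj_of_int_rep[of X "- y"] by (simp add: u' u_def)
  have "u * u' = of_int X * of_int X - of_int y * of_int y * (sqrtd * sqrtd)"
    by (simp add: u_def u' algebra_simps)
  also have "\<dots> = of_int (X * X - d * y * y)" unfolding sqrtd_square by simp
  finally have uu': "u * u' = 1" using pell by (simp add: X_def abs_mult_self_eq)
  have "u + u' = of_int (2 * X)" by (simp add: u_def u')
  hence "u + u' > 0" using \<open>X \<ge> 1\<close> by simp
  hence "u > 0" "u' > 0" using uu' zero_less_mult_iff[of u u'] by auto
  have "u \<in> qints d" "u' \<in> qints d"
    using K uu' \<open>u + u' = _\<close> conj by (auto simp: qints_iff u'_def[symmetric] add.commute mult.commute)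
  moreover have "inverse u = u'" using uu' by (simp add: inverse_unique)
  ultimately have "u \<in> qunits_pos d"
    using \<open>u > 0\<close> \<open>u' > 0\<close> by (simp add: qunits_pos_def qints_pos_def u'_def)
  moreover have "u \<noteq> 1"
  proof
    assume "u = 1"
    hence "of_rat (of_int X) + of_rat (of_int y) * sqrtd = of_rat 1 + of_rat 0 * sqrtd" by (simp add: u_def)
    with \<open>y \<noteq> 0\<close> show False by (simp only: quad_field_rep_eq_iff) simp
  qed
  ultimately show ?thesis by blast
qed

text \<open>An element of the ring of integers is determined by its trace and by (x - x') sqrt d, both
  integers lying in intervals of lengths 2 and 2 sqrt d when x and x' are confined to unit intervals.\<close>
lemma qints_box_finite:
  "finite {x \<in> qints d. a \<le> x \<and> x \<le> a + 1 \<and> b \<le> qconj d x \<and> qconj d x \<le> b + 1}"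
  and qints_box_card:
  "card {x \<in> qints d. a \<le> x \<and> x \<le> a + 1 \<and> b \<le> qconj d x \<and> qconj d x \<le> b + 1}
     \<le> 3 * (nat \<lfloor>2 * sqrtd\<rfloor> + 1)"
proof -
  define B where "B = {x \<in> qints d. a \<le> x \<and> x \<le> a + 1 \<and> b \<le> qconj d x \<and> qconj d x \<le> b + 1}"
  define I where "I = (\<lambda>lo L. {z::real. z \<in> \<int> \<and> lo \<le> z \<and> z \<le> lo + L})"
  define \<Phi> where "\<Phi> = (\<lambda>x. (x + qconj d x, (x - qconj d x) * sqrtd))"
  have inj: "inj_on \<Phi> B"
  proof (rule inj_onI)
    fix x y assume "\<Phi> x = \<Phi> y"
    hence "x + qconj d x = y + qconj d y" "x - qconj d x = y - qconj d y"
      using sqrtd_pos by (auto simp: \<Phi>_def)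
    thus "x = y" by linarith
  qed
  have sub: "\<Phi> ` B \<subseteq> I (a + b) 2 \<times> I ((a - b - 1) * sqrtd) (2 * sqrtd)"
  proof (rule image_subsetI)
    fix x assume "x \<in> B"
    hence x: "x \<in> qints d" "a \<le> x" "x \<le> a + 1" "b \<le> qconj d x" "qconj d x \<le> b + 1"
      by (auto simp: B_def)
    have "(a - b - 1) * sqrtd \<le> (x - qconj d x) * sqrtd" "(x - qconj d x) * sqrtd \<le> (a - b - 1) * sqrtd + 2 * sqrtd"
      using x sqrtd_pos by (auto intro!: mult_right_mono simp flip: distrib_right)
    thus "\<Phi> x \<in> I (a + b) 2 \<times> I ((a - b - 1) * sqrtd) (2 * sqrtd)"
      using x qints_diff_conj_sqrtd_Ints[OF x(1)] by (auto simp: \<Phi>_def I_def qints_iff)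
  qed
  have I: "finite (I lo L)" "card (I lo L) \<le> nat \<lfloor>L\<rfloor> + 1" if "L \<ge> 0" for lo L
    using card_Ints_interval_le[OF that] by (simp_all add: I_def)
  have fin: "finite (I (a + b) 2 \<times> I ((a - b - 1) * sqrtd) (2 * sqrtd))"
    using I(1) sqrtd_pos by simp
  show "finite B" using inj_on_finite[OF inj sub fin] .
  have "card B \<le> card (I (a + b) 2) * card (I ((a - b - 1) * sqrtd) (2 * sqrtd))"
    using card_inj_on_le[OF inj sub fin] by (simp add: card_cartesian_product)
  also have "\<dots> \<le> 3 * (nat \<lfloor>2 * sqrtd\<rfloor> + 1)"
    using I(2)[of 2] I(2)[of "2 * sqrtd"] sqrtd_pos by (intro mult_mono) auto
  finally show "card B \<le> 3 * (nat \<lfloor>2 * sqrtd\<rfloor> + 1)" .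
qed

definition int_parts :: "real \<Rightarrow> nat \<times> nat" where
  "int_parts x = (nat \<lfloor>x\<rfloor>, nat \<lfloor>qconj d x\<rfloor>)"

lemma qints_pos_int_parts_finite: "finite {x \<in> qints_pos d. int_parts x = ij}"
  and qints_pos_int_parts_card: "card {x \<in> qints_pos d. int_parts x = ij} \<le> 3 * (nat \<lfloor>2 * sqrtd\<rfloor> + 1)"
proof -
  let ?B = "{x \<in> qints d. real (fst ij) \<le> x \<and> x \<le> real (fst ij) + 1 \<and>
                          real (snd ij) \<le> qconj d x \<and> qconj d x \<le> real (snd ij) + 1}"
  have sub: "{x \<in> qints_pos d. int_parts x = ij} \<subseteq> ?B"
    by (auto simp: int_parts_def qints_pos_def)
  show "finite {x \<in> qints_pos d. int_parts x = ij}" using finite_subset[OF sub qints_box_finite] .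
  show "card {x \<in> qints_pos d. int_parts x = ij} \<le> 3 * (nat \<lfloor>2 * sqrtd\<rfloor> + 1)"
    using card_mono[OF qints_box_finite sub] qints_box_card by (rule order_trans)
qed

lemma int_parts_pairs_fibre:
  assumes "A \<subseteq> qints_pos d \<times> qints_pos d"
  defines "M \<equiv> 3 * (nat \<lfloor>2 * sqrtd\<rfloor> + 1)"
  shows "finite {w \<in> A. map_prod int_parts int_parts w = y}"
    and "card {w \<in> A. map_prod int_parts int_parts w = y} \<le> M * M"
proof -
  let ?F = "{w \<in> A. map_prod int_parts int_parts w = y}"
  let ?B = "\<lambda>ij. {x \<in> qints_pos d. int_parts x = ij}"
  have sub: "?F \<subseteq> ?B (fst y) \<times> ?B (snd y)" using assms(1) by force
  have fin: "finite (?B (fst y) \<times> ?B (snd y))" using qints_pos_int_parts_finite by simp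
  show "finite ?F" using finite_subset[OF sub fin] .
  have "card ?F \<le> card (?B (fst y)) * card (?B (snd y))"
    using card_mono[OF fin sub] by (simp add: card_cartesian_product)
  also have "\<dots> \<le> M * M" using qints_pos_int_parts_card by (intro mult_mono) (auto simp: M_def)
  finally show "card ?F \<le> M * M" .
qed

lemma summable_on_qnorm_pairs:
  fixes c :: real and m n :: nat
  assumes "0 < c" "c \<le> 1" "m \<ge> 2" "n \<ge> 2"
  shows "(\<lambda>(u, v). 1 / (qnorm d u ^ m * qnorm d (u + v) ^ n)) summable_on
           {(u, v). u \<in> qints_pos d \<and> v \<in> qints_pos d \<and> c \<le> u \<and> c \<le> qconj d u}"
    (is "?f summable_on ?A")
proof -
  define \<psi> where "\<psi> p = (\<lambda>(i, j). (2 / c) ^ (2 * p) / ((1 + real i) * (1 + real j)) ^ p)" for p :: nat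
  have \<psi>_nonneg: "\<psi> p y \<ge> 0" for p y using assms by (auto simp: \<psi>_def split: prod.split)
  have \<psi>_summable: "\<psi> p summable_on UNIV" if "p \<ge> 2" for p
    using summable_on_cmult_right[OF inverse_power_pairs_summable_on[OF that], of "(2 / c) ^ (2 * p)"]
    by (simp add: \<psi>_def case_prod_unfold)
  show ?thesis
  proof (rule nonneg_summable_on_bounded_fibres[where \<pi> = "map_prod int_parts int_parts"])
    show "(\<lambda>(y, z). \<psi> m y * \<psi> n z) summable_on UNIV"
      using assms by (intro nonneg_summable_on_product \<psi>_summable \<psi>_nonneg) auto
    show "0 \<le> (\<lambda>(y, z). \<psi> m y * \<psi> n z) w" for w
      unfolding case_prod_unfold by (intro mult_nonneg_nonneg \<psi>_nonneg)
  next
    fix w assume "w \<in> ?A"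
    then obtain u v where w: "w = (u, v)" and uv: "u \<in> qints_pos d" "v \<in> qints_pos d" "c \<le> u" "c \<le> qconj d u"
      by blast
    have pos: "u > 0" "qconj d u > 0" "v > 0" "qconj d v > 0" using uv by (auto simp: qints_pos_def)
    have K: "u \<in> quad_field d" "v \<in> quad_field d" using uv by (auto simp: qints_pos_def qints_def)
    have N: "qnorm d u = u * qconj d u" "qnorm d (u + v) = (u + v) * (qconj d u + qconj d v)"
      by (simp_all add: qnorm_def qconj_add[OF K])
    have "?f w = 1 / qnorm d u ^ m * (1 / qnorm d (u + v) ^ n)" by (simp add: w)
    also have "\<dots> \<le> \<psi> m (int_parts u) * \<psi> n (int_parts v)"
      unfolding N int_parts_def \<psi>_def prod.case using uv pos assms(1,2)
      by (intro mult_mono inverse_power_prod_le_floors) (auto simp: less_imp_le)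
    finally show "0 \<le> ?f w \<and> ?f w \<le> (\<lambda>(y, z). \<psi> m y * \<psi> n z) (map_prod int_parts int_parts w)"
      using pos by (simp add: w N)
  next
    show "finite {w \<in> ?A. map_prod int_parts int_parts w = y} \<and>
          card {w \<in> ?A. map_prod int_parts int_parts w = y} \<le> (3 * (nat \<lfloor>2 * sqrtd\<rfloor> + 1))\<^sup>2" for y
      using int_parts_pairs_fibre[of ?A y] by (auto simp: power2_eq_square)
  qed
qed

end

section \<open>Summation over unit orbits\<close>

locale unit_orbit_representatives = real_quadratic_field +
  fixes \<epsilon> :: real and C :: "real set"
  assumes generator: "qunits_pos d = {\<epsilon> powi k | k. True}"
    and eps_unit: "\<epsilon> \<in> qunits_pos d"
    and C_sub: "C \<subseteq> qints_pos d"
    and C_rep: "\<forall>\<alpha>\<in>qints_pos d. \<exists>!c. c \<in> C \<and> (\<exists>u\<in>qunits_pos d. \<alpha> = u * c)"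
begin

lemma eps_pos: "\<epsilon> > 0"
  using eps_unit by (simp add: qunits_pos_def qints_pos_def)

lemma powi_eps_qunits_pos: "\<epsilon> powi k \<in> qunits_pos d"
  using generator by blast

lemma eps_ne_1: "\<epsilon> \<noteq> 1"
proof
  assume "\<epsilon> = 1"
  obtain u where "u \<in> qunits_pos d" "u \<noteq> 1" using qunits_pos_nontrivial by blast
  with \<open>\<epsilon> = 1\<close> show False using generator by auto
qed

lemma powi_eps_inject: "\<epsilon> powi k = \<epsilon> powi j \<Longrightarrow> k = j"
  using eps_pos eps_ne_1 powr_inj[of \<epsilon> "of_int k" "of_int j"] by (simp add: powr_real_of_int')

lemma qunits_pos_divide:
  assumes "u \<in> qunits_pos d" "w \<in> qunits_pos d"
  shows "u / w \<in> qunits_pos d"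
proof -
  obtain i j where "u = \<epsilon> powi i" "w = \<epsilon> powi j" using assms generator by auto
  hence "u / w = \<epsilon> powi (i - j)" using eps_pos by (simp add: power_int_diff)
  thus ?thesis by (simp add: powi_eps_qunits_pos)
qed

lemma representative_unique:
  assumes "\<alpha> \<in> C" "\<beta> \<in> C" "w \<in> qunits_pos d" "\<alpha> = w * \<beta>"
  shows "\<alpha> = \<beta>"
proof -
  have "1 \<in> qunits_pos d" using powi_eps_qunits_pos[of 0] by simp
  hence "\<exists>u\<in>qunits_pos d. \<alpha> = u * \<alpha>" by force
  thus ?thesis using C_rep assms C_sub by blast
qed

definition balance_bound :: real where
  "balance_bound = inverse (max \<epsilon> (inverse \<epsilon>))"

lemma balance_bound_pos: "0 < balance_bound" and balance_bound_le_1: "balance_bound \<le> 1"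
proof -
  have "max \<epsilon> (inverse \<epsilon>) > 1" using max_inverse_gt_1 eps_pos eps_ne_1 by simp
  thus "0 < balance_bound" "balance_bound \<le> 1" by (simp_all add: balance_bound_def inverse_le_1_iff)
qed

lemma exists_balancing_unit:
  assumes "\<alpha> \<in> qints_pos d"
  shows "\<exists>w\<in>qunits_pos d. balance_bound \<le> w * \<alpha> \<and> balance_bound \<le> qconj d \<alpha> / w"
proof -
  define \<eta> where "\<eta> = max \<epsilon> (inverse \<epsilon>)"
  have "\<eta> > 1" using max_inverse_gt_1 eps_pos eps_ne_1 by (simp add: \<eta>_def)
  moreover have "\<alpha> * qconj d \<alpha> \<ge> 1" using qints_pos_qnorm_ge_1[OF assms] by (simp add: qnorm_def)
  ultimately obtain j where j: "inverse \<eta> \<le> \<eta> powi j * \<alpha>" "inverse \<eta> \<le> qconj d \<alpha> / \<eta> powi j"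
    using exists_power_int_balance[of \<eta> \<alpha> "qconj d \<alpha>"] assms by (auto simp: qints_pos_def)
  have "\<eta> powi j \<in> qunits_pos d"
  proof (cases "\<epsilon> \<ge> inverse \<epsilon>")
    case True
    thus ?thesis by (simp add: \<eta>_def powi_eps_qunits_pos)
  next
    case False
    hence "\<eta> powi j = \<epsilon> powi (- j)" by (simp add: \<eta>_def power_int_minus power_int_inverse)
    thus ?thesis by (simp add: powi_eps_qunits_pos)
  qed
  with j show ?thesis unfolding \<eta>_def balance_bound_def by blast
qed

definition balancing_unit :: "real \<Rightarrow> real" where
  "balancing_unit \<alpha> =
     (SOME w. w \<in> qunits_pos d \<and> balance_bound \<le> w * \<alpha> \<and> balance_bound \<le> qconj d \<alpha> / w)"

lemma balancing_unit:
  assumes "\<alpha> \<in> qints_pos d"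
  shows "balancing_unit \<alpha> \<in> qunits_pos d" "balance_bound \<le> balancing_unit \<alpha> * \<alpha>"
    "balance_bound \<le> qconj d \<alpha> / balancing_unit \<alpha>"
  using someI_ex[OF exists_balancing_unit[OF assms, unfolded Bex_def]]
  unfolding balancing_unit_def by blast+

definition orbit_triples :: "(int \<times> real \<times> real) set" where
  "orbit_triples = {(k, \<alpha>, \<beta>). \<alpha> \<in> C \<and> \<beta> \<in> (\<lambda>x. \<epsilon> powi k * x) ` C}"

lemma orbit_triplesE:
  assumes "x \<in> orbit_triples"
  obtains k \<alpha> \<gamma> where "x = (k, \<alpha>, \<epsilon> powi k * \<gamma>)" "\<alpha> \<in> C" "\<gamma> \<in> C"
proof -
  obtain k \<alpha> \<beta> where x: "x = (k, \<alpha>, \<beta>)" by (cases x)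
  with assms have "\<alpha> \<in> C" "\<beta> \<in> (\<lambda>x. \<epsilon> powi k * x) ` C" by (simp_all add: orbit_triples_def)
  thus thesis using that x by blast
qed

definition rescale :: "int \<times> real \<times> real \<Rightarrow> real \<times> real" where
  "rescale = (\<lambda>(k, \<alpha>, \<beta>). (balancing_unit \<alpha> * \<alpha>, balancing_unit \<alpha> * \<beta>))"

lemma inj_on_rescale: "inj_on rescale orbit_triples"
proof (rule inj_onI)
  fix x x' assume "x \<in> orbit_triples" "x' \<in> orbit_triples" and eq: "rescale x = rescale x'"
  obtain k \<alpha> \<gamma> where x: "x = (k, \<alpha>, \<epsilon> powi k * \<gamma>)" "\<alpha> \<in> C" "\<gamma> \<in> C"
    using \<open>x \<in> orbit_triples\<close> by (rule orbit_triplesE)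
  obtain k' \<alpha>' \<gamma>' where x': "x' = (k', \<alpha>', \<epsilon> powi k' * \<gamma>')" "\<alpha>' \<in> C" "\<gamma>' \<in> C"
    using \<open>x' \<in> orbit_triples\<close> by (rule orbit_triplesE)
  define W W' where "W = balancing_unit \<alpha>" and "W' = balancing_unit \<alpha>'"
  have units: "W \<in> qunits_pos d" "W' \<in> qunits_pos d"
    using balancing_unit(1) x(2) x'(2) C_sub by (auto simp: W_def W'_def)
  hence W_pos: "W > 0" "W' > 0" by (auto simp: qunits_pos_def qints_pos_def)
  have "\<alpha> = (W' / W) * \<alpha>'" using eq W_pos by (simp add: rescale_def x x' W_def W'_def field_simps)
  hence "\<alpha> = \<alpha>'" using representative_unique[OF x(2) x'(2) qunits_pos_divide[OF units(2,1)]] by blast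
  hence "\<epsilon> powi k * \<gamma> = \<epsilon> powi k' * \<gamma>'" using eq W_pos by (simp add: rescale_def x x' W_def)
  hence "\<gamma> = (\<epsilon> powi k' / \<epsilon> powi k) * \<gamma>'" using eps_pos by (simp add: field_simps)
  hence "\<gamma> = \<gamma>'"
    using representative_unique[OF x(3) x'(3) qunits_pos_divide[OF powi_eps_qunits_pos powi_eps_qunits_pos]]
    by blast
  moreover have "\<gamma>' > 0" using x'(3) C_sub by (auto simp: qints_pos_def)
  ultimately have "k = k'" using \<open>\<epsilon> powi k * \<gamma> = \<epsilon> powi k' * \<gamma>'\<close> powi_eps_inject by simp
  with \<open>\<alpha> = \<alpha>'\<close> \<open>\<gamma> = \<gamma>'\<close> show "x = x'" by (simp add: x x')
qed

lemma rescale_orbit_triple: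
  assumes "(k, \<alpha>, \<beta>) \<in> orbit_triples"
  shows "rescale (k, \<alpha>, \<beta>) \<in>
           {(u, v). u \<in> qints_pos d \<and> v \<in> qints_pos d \<and> balance_bound \<le> u \<and> balance_bound \<le> qconj d u}"
    and "qnorm d (fst (rescale (k, \<alpha>, \<beta>))) = qnorm d \<alpha>"
    and "qnorm d (fst (rescale (k, \<alpha>, \<beta>)) + snd (rescale (k, \<alpha>, \<beta>))) = qnorm d (\<alpha> + \<beta>)"
proof -
  obtain \<gamma> where "\<alpha> \<in> C" "\<gamma> \<in> C" "\<beta> = \<epsilon> powi k * \<gamma>"
    using assms by (auto simp: orbit_triples_def)
  hence \<alpha>: "\<alpha> \<in> qints_pos d" and \<beta>: "\<beta> \<in> qints_pos d"
    using C_sub qunits_pos_mult(1)[OF powi_eps_qunits_pos] by auto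
  note W = balancing_unit[OF \<alpha>]
  show "rescale (k, \<alpha>, \<beta>) \<in>
          {(u, v). u \<in> qints_pos d \<and> v \<in> qints_pos d \<and> balance_bound \<le> u \<and> balance_bound \<le> qconj d u}"
    using W qunits_pos_mult[OF W(1) \<alpha>] qunits_pos_mult[OF W(1) \<beta>] by (simp add: rescale_def)
  have K: "\<alpha> \<in> quad_field d" "\<beta> \<in> quad_field d" using \<alpha> \<beta> by (auto simp: qints_pos_def qints_def)
  have "balancing_unit \<alpha> * \<alpha> + balancing_unit \<alpha> * \<beta> = balancing_unit \<alpha> * (\<alpha> + \<beta>)"
    by (simp add: algebra_simps)
  thus "qnorm d (fst (rescale (k, \<alpha>, \<beta>))) = qnorm d \<alpha>"
    "qnorm d (fst (rescale (k, \<alpha>, \<beta>)) + snd (rescale (k, \<alpha>, \<beta>))) = qnorm d (\<alpha> + \<beta>)"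
    using W(1) K quad_field_add[OF K] by (simp_all add: rescale_def qnorm_qunits_pos_mult)
qed

lemma summable_on_orbit_triples:
  assumes "m \<ge> 2" "n \<ge> 2"
  shows "(\<lambda>(k::int, \<alpha>, \<beta>). 1 / (qnorm d \<alpha> ^ m * qnorm d (\<alpha> + \<beta>) ^ n)) summable_on orbit_triples"
proof -
  define F where "F = (\<lambda>(u, v). 1 / (qnorm d u ^ m * qnorm d (u + v) ^ n))"
  have "rescale ` orbit_triples \<subseteq>
          {(u, v). u \<in> qints_pos d \<and> v \<in> qints_pos d \<and> balance_bound \<le> u \<and> balance_bound \<le> qconj d u}"
    using rescale_orbit_triple(1) by force
  hence "F summable_on rescale ` orbit_triples" unfolding F_def
    by (rule summable_on_subset[OF summable_on_qnorm_pairs[OF balance_bound_pos balance_bound_le_1 assms]])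
  hence "(F \<circ> rescale) summable_on orbit_triples" by (simp only: summable_on_reindex[OF inj_on_rescale])
  moreover have "(F \<circ> rescale) x = (\<lambda>(k, \<alpha>, \<beta>). 1 / (qnorm d \<alpha> ^ m * qnorm d (\<alpha> + \<beta>) ^ n)) x"
    if "x \<in> orbit_triples" for x
    using that rescale_orbit_triple(2,3)[of "fst x" "fst (snd x)" "snd (snd x)"]
    by (simp add: F_def case_prod_unfold)
  ultimately show ?thesis using summable_on_cong[of orbit_triples "F \<circ> rescale"] by blast
qed

end

theorem mainTheorem11:
  fixes d :: int and \<epsilon> :: real and C :: "real set" and m n :: nat
  assumes "squarefree d" and "d > 1"
    and gen: "qunits_pos d = {\<epsilon> powi k | k. True}"
    and \<epsilon>_unit: "\<epsilon> \<in> qunits_pos d"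
    and C_sub: "C \<subseteq> qints_pos d"
    and C_rep: "\<forall>\<alpha>\<in>qints_pos d. \<exists>!c. c \<in> C \<and> (\<exists>u\<in>qunits_pos d. \<alpha> = u * c)"
    and "n > 1" and "m > n"
  shows "(\<lambda>(k::int, \<alpha>, \<beta>). 1 / (qnorm d \<alpha> ^ m * qnorm d (\<alpha> + \<beta>) ^ n))
           summable_on {(k, \<alpha>, \<beta>). \<alpha> \<in> C \<and> \<beta> \<in> (\<lambda>x. \<epsilon> powi k * x) ` C}"
proof -
  interpret unit_orbit_representatives d \<epsilon> C
    using assms by unfold_locales auto
  have "m \<ge> 2" "n \<ge> 2" using \<open>n > 1\<close> \<open>m > n\<close> by simp_all
  from summable_on_orbit_triples[OF this] show ?thesis by (simp only: orbit_triples_def)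
qed

end
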